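(* Let $U\subseteq\mathbb{R}$ satisfy $|\mathbb{R}\setminus U| = \mathfrak{c}$. Then there is a two-point selection $f$ on $\mathbb{R}$ such that the interior of $U$ in the topology $\tau_f$ is empty. In particular, if $U\neq\emptyset$, then $U\notin\tau_f$.
   Context: $\mathfrak{c}=|\mathbb{R}|$. A two-point selection on $\mathbb{R}$ is a function $f$ from the set of two-element subsets of $\mathbb{R}$ to $\mathbb{R}$ with $f(F)\in F$. Write $r<_f s$ if $f(\{r,s\})=r$ ($r\ne s$), $(\leftarrow,r)_f=\{x: x<_f r\}$, $(r,\rightarrow)_f=\{x: r<_f x\}$. The topology $\tau_f$ on $\mathbb{R}$ is the topology generated (as a subbase) by all sets $(\leftarrow,r)_f$, $(r,\rightarrow)_f$, $r\in\mathbb{R}$. *)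

theory Defs
  imports "HOL-Analysis.Analysis" "HOL-Library.Equipollence"
begin

definition two_point_selection :: "(real set \<Rightarrow> real) \<Rightarrow> bool" where
  "two_point_selection f \<longleftrightarrow> (\<forall>x y. x \<noteq> y \<longrightarrow> f {x, y} \<in> {x, y})"

definition sel_less :: "(real set \<Rightarrow> real) \<Rightarrow> real \<Rightarrow> real \<Rightarrow> bool" where
  "sel_less f r s \<longleftrightarrow> r \<noteq> s \<and> f {r, s} = r"

definition sel_left_ray :: "(real set \<Rightarrow> real) \<Rightarrow> real \<Rightarrow> real set" where
  "sel_left_ray f r = {x. sel_less f x r}"

definition sel_right_ray :: "(real set \<Rightarrow> real) \<Rightarrow> real \<Rightarrow> real set" where
  "sel_right_ray f r = {x. sel_less f r x}"

definition sel_topology :: "(real set \<Rightarrow> real) \<Rightarrow> real topology" where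
  "sel_topology f = topology_generated_by
     ((\<Union>r. {sel_left_ray f r, sel_right_ray f r}))"

end

theory Submission
  imports Defs
begin

text \<open>A basic open set of \<open>\<tau>\<^sub>f\<close> is cut out by finitely many rays, i.e. by finite sets
  \<open>A\<close>, \<open>B\<close> of points it must lie below, resp. above.  Since \<open>\<real> - U\<close> has size continuum,
  each pair \<open>(A, B)\<close> can be attached as a label to infinitely many points \<open>v \<notin> U\<close>, and the
  selection is chosen to put every such \<open>v\<close> below \<open>A\<close> and above \<open>B\<close>.  Only finitely many of
  these \<open>v\<close> can conflict with the labels of the points of \<open>A \<union> B\<close>, so every nonempty basic
  open set contains a point outside \<open>U\<close>.\<close>

lemma infinite_fibres_labelling:
  fixes V :: "'b set"
  assumes "infinite V" and "(UNIV :: 'a set) \<lesssim> V"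
  obtains L :: "'b \<Rightarrow> 'a" where "\<And>p. infinite {v \<in> V. L v = p}"
proof -
  have "V \<times> (UNIV :: 'a set) \<lesssim> V \<times> V"
    by (rule times_lepoll_mono[OF lepoll_refl assms(2)])
  also have "V \<times> V \<approx> V"
    unfolding eqpoll_iff_card_of_ordIso by (rule card_of_Times_same_infinite[OF assms(1)])
  finally obtain e :: "'b \<times> 'a \<Rightarrow> 'b" where e: "inj_on e (V \<times> UNIV)" "e ` (V \<times> UNIV) \<subseteq> V"
    by (auto simp: lepoll_def)
  show thesis
  proof (rule that)
    fix p
    define L where "L v = snd (inv_into (V \<times> UNIV) e v)" for v
    have "L (e (t, p)) = p" if "t \<in> V" for t
      using e(1) that by (simp add: L_def)
    then have "(\<lambda>t. e (t, p)) ` V \<subseteq> {v \<in> V. L v = p}"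
      using e(2) by auto
    moreover have "inj_on (\<lambda>t. e (t, p)) V"
      using e(1) by (auto simp: inj_on_def)
    then have "infinite ((\<lambda>t. e (t, p)) ` V)"
      using assms(1) by (simp add: finite_image_iff)
    ultimately show "infinite {v \<in> V. L v = p}"
      using infinite_super by blast
  qed
qed

lemma nat_fun_real_lepoll_reals: "(UNIV :: (nat \<Rightarrow> real) set) \<lesssim> (UNIV :: real set)"
proof -
  obtain h :: "real \<Rightarrow> nat set" where h: "inj h"
    using eqpoll_sym[OF nat_sets_eqpoll_reals] unfolding eqpoll_def bij_betw_def by blast
  define enc where "enc F = prod_encode ` {(i, j). j \<in> h (F i)}" for F :: "nat \<Rightarrow> real"
  have "inj enc"
  proof (rule injI)
    fix F G assume "enc F = enc G"
    then have "{(i, j). j \<in> h (F i)} = {(i, j). j \<in> h (G i)}"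
      unfolding enc_def by (simp add: inj_image_eq_iff inj_prod_encode)
    then have "h (F i) = h (G i)" for i
      by (auto simp: set_eq_iff)
    then have "F i = G i" for i
      using h by (simp add: inj_eq)
    then show "F = G" ..
  qed
  then have "(UNIV :: (nat \<Rightarrow> real) set) \<lesssim> (UNIV :: nat set set)"
    unfolding lepoll_def by blast
  then show ?thesis
    using nat_sets_eqpoll_reals lepoll_trans2 by blast
qed

lemma real_lists_lepoll_reals: "(UNIV :: real list set) \<lesssim> (UNIV :: real set)"
proof -
  define enc where "enc xs = (\<lambda>i. case i of 0 \<Rightarrow> real (length xs) | Suc k \<Rightarrow> xs ! k)"
    for xs :: "real list"
  have "inj enc"
  proof (rule injI)
    fix xs ys assume eq: "enc xs = enc ys"
    have "length xs = length ys"
      using fun_cong[OF eq, of 0] by (simp add: enc_def)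
    moreover have "xs ! k = ys ! k" for k
      using fun_cong[OF eq, of "Suc k"] by (simp add: enc_def)
    ultimately show "xs = ys"
      by (rule nth_equalityI)
  qed
  then have "(UNIV :: real list set) \<lesssim> (UNIV :: (nat \<Rightarrow> real) set)"
    unfolding lepoll_def by blast
  then show ?thesis
    using nat_fun_real_lepoll_reals lepoll_trans by blast
qed

lemma real_list_pairs_lepoll_reals: "(UNIV :: (real list \<times> real list) set) \<lesssim> (UNIV :: real set)"
proof -
  have "inj (\<lambda>(as, bs). real (length as) # as @ bs)"
    by (auto intro!: injI)
  then have "(UNIV :: (real list \<times> real list) set) \<lesssim> (UNIV :: real list set)"
    unfolding lepoll_def by blast
  then show ?thesis
    using real_lists_lepoll_reals lepoll_trans by blast
qed

lemma generate_topology_on_imp_finite_Inter: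
  assumes "generate_topology_on S W" and "x \<in> W"
  obtains F where "finite F" "F \<subseteq> S" "x \<in> \<Inter>F" "\<Inter>F \<subseteq> W"
proof -
  have "(arbitrary union_of finite' intersection_of (\<lambda>K. K \<in> S)) W"
    using assms(1) by (simp add: generate_topology_on_eq)
  then obtain U where U: "(finite' intersection_of (\<lambda>K. K \<in> S)) U" "x \<in> U" "U \<subseteq> W"
    using assms(2) unfolding arbitrary_union_of_alt by blast
  then obtain F where "finite F" "F \<subseteq> S" "\<Inter>F = U"
    unfolding intersection_of_def by auto
  then show thesis
    using that U(2,3) by blast
qed

definition sel_box :: "(real set \<Rightarrow> real) \<Rightarrow> real set \<Rightarrow> real set \<Rightarrow> real set" where
  "sel_box f A B = (\<Inter>a\<in>A. sel_left_ray f a) \<inter> (\<Inter>b\<in>B. sel_right_ray f b)"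

lemma openin_sel_topology_imp_sel_box:
  assumes "openin (sel_topology f) W" and "x \<in> W"
  obtains A B where "finite A" "finite B" "x \<in> sel_box f A B" "sel_box f A B \<subseteq> W"
proof -
  have "generate_topology_on (\<Union>r. {sel_left_ray f r, sel_right_ray f r}) W"
    using assms(1) by (simp add: sel_topology_def openin_topology_generated_by_iff)
  then obtain F where F: "finite F" "F \<subseteq> (\<Union>r. {sel_left_ray f r, sel_right_ray f r})"
      "x \<in> \<Inter>F" "\<Inter>F \<subseteq> W"
    using assms(2) by (rule generate_topology_on_imp_finite_Inter)
  obtain A where A: "finite A" "F \<inter> range (sel_left_ray f) = sel_left_ray f ` A"
    using finite_subset_image[of "F \<inter> range (sel_left_ray f)" "sel_left_ray f" UNIV] F(1)
    by auto
  obtain B where B: "finite B" "F \<inter> range (sel_right_ray f) = sel_right_ray f ` B"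
    using finite_subset_image[of "F \<inter> range (sel_right_ray f)" "sel_right_ray f" UNIV] F(1)
    by auto
  have "F = (F \<inter> range (sel_left_ray f)) \<union> (F \<inter> range (sel_right_ray f))"
    using F(2) by blast
  then have box: "sel_box f A B = \<Inter>F"
    unfolding A(2) B(2) sel_box_def by (simp add: Inter_Un_distrib)
  show thesis
    using F(3,4) by (intro that[OF A(1) B(1)]) (simp_all add: box)
qed

lemma sel_less_asym: "sel_less f x y \<Longrightarrow> \<not> sel_less f y x"
  unfolding sel_less_def by (metis insert_commute)

lemma sel_box_disjoint: "x \<in> sel_box f A B \<Longrightarrow> A \<inter> B = {}"
  unfolding sel_box_def sel_left_ray_def sel_right_ray_def using sel_less_asym by blast

text \<open>\<open>R x y\<close> requests that \<open>x\<close> be chosen from \<open>{x, y}\<close>; pairs with no request or with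
  contradictory requests fall back to the smaller point.\<close>

definition selection_by :: "(real \<Rightarrow> real \<Rightarrow> bool) \<Rightarrow> real set \<Rightarrow> real" where
  "selection_by R S = (if R (Max S) (Min S) \<and> \<not> R (Min S) (Max S) then Max S else Min S)"

lemma two_point_selection_selection_by: "two_point_selection (selection_by R)"
  unfolding two_point_selection_def selection_by_def by auto

lemma sel_less_selection_by:
  assumes "x \<noteq> y" and "R x y" and "\<not> R y x"
  shows "sel_less (selection_by R) x y"
  using assms by (cases "x < y") (auto simp: sel_less_def selection_by_def min_def max_def)

text \<open>\<open>L v = (as, bs)\<close> asks for \<open>v\<close> to lie below the points of \<open>as\<close> and above those of \<open>bs\<close>.\<close>

definition label_prec :: "(real \<Rightarrow> real list \<times> real list) \<Rightarrow> real \<Rightarrow> real \<Rightarrow> bool" where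
  "label_prec L x y \<longleftrightarrow> y \<in> set (fst (L x)) \<or> x \<in> set (snd (L y))"

lemma labelled_point_in_sel_box:
  assumes "L v = (as, bs)" and "set as \<inter> set bs = {}" and "v \<notin> set as \<union> set bs"
    and "\<And>w. w \<in> set as \<union> set bs \<Longrightarrow> v \<notin> set (fst (L w)) \<union> set (snd (L w))"
  shows "v \<in> sel_box (selection_by (label_prec L)) (set as) (set bs)"
proof -
  have "sel_less (selection_by (label_prec L)) v a" if "a \<in> set as" for a
    using that assms by (intro sel_less_selection_by) (auto simp: label_prec_def)
  moreover have "sel_less (selection_by (label_prec L)) b v" if "b \<in> set bs" for b
    using that assms by (intro sel_less_selection_by) (auto simp: label_prec_def)
  ultimately show ?thesis
    by (auto simp: sel_box_def sel_left_ray_def sel_right_ray_def)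
qed

lemma openin_selection_by_label_prec_meets:
  assumes fibres: "\<And>p. infinite {v \<in> V. L v = p}"
    and W: "openin (sel_topology (selection_by (label_prec L))) W" "W \<noteq> {}"
  shows "W \<inter> V \<noteq> {}"
proof -
  let ?f = "selection_by (label_prec L)"
  obtain x where "x \<in> W"
    using W(2) by blast
  then obtain A B where AB: "finite A" "finite B" "x \<in> sel_box ?f A B" "sel_box ?f A B \<subseteq> W"
    using W(1) openin_sel_topology_imp_sel_box by metis
  obtain as bs where as: "set as = A" and bs: "set bs = B"
    using AB(1,2) finite_list by metis
  define C where "C = A \<union> B \<union> (\<Union>w\<in>A \<union> B. set (fst (L w)) \<union> set (snd (L w)))"
  have "finite C"
    using AB(1,2) by (simp add: C_def)
  then have "infinite ({v \<in> V. L v = (as, bs)} - C)"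
    using fibres by (rule Diff_infinite_finite)
  then obtain v where v: "v \<in> V" "L v = (as, bs)" "v \<notin> C"
    using infinite_imp_nonempty by blast
  have "v \<in> sel_box ?f A B"
    unfolding as[symmetric] bs[symmetric]
  proof (rule labelled_point_in_sel_box)
    show "L v = (as, bs)" by (fact v(2))
    show "set as \<inter> set bs = {}"
      using sel_box_disjoint AB(3) as bs by blast
    show "v \<notin> set as \<union> set bs"
      using v(3) as bs by (simp add: C_def)
    show "v \<notin> set (fst (L w)) \<union> set (snd (L w))" if "w \<in> set as \<union> set bs" for w
      using v(3) that as bs by (auto simp: C_def)
  qed
  then show ?thesis
    using AB(4) v(1) by blast
qed

theorem theorem3p12:
  fixes U :: "real set"
  assumes "(UNIV - U) \<approx> (UNIV :: real set)"
  shows "\<exists>f. two_point_selection f \<and> (sel_topology f) interior_of U = {}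
              \<and> (U \<noteq> {} \<longrightarrow> \<not> openin (sel_topology f) U)"
proof -
  have "infinite (UNIV - U)"
    using assms eqpoll_finite_iff infinite_UNIV_char_0 by blast
  moreover have "(UNIV :: (real list \<times> real list) set) \<lesssim> UNIV - U"
    using real_list_pairs_lepoll_reals eqpoll_sym[OF assms] by (rule lepoll_trans2)
  ultimately obtain L :: "real \<Rightarrow> real list \<times> real list"
    where L: "\<And>p. infinite {v \<in> UNIV - U. L v = p}"
    using infinite_fibres_labelling by blast
  define f where "f = selection_by (label_prec L)"
  have interior: "sel_topology f interior_of U = {}"
  proof (rule ccontr)
    assume "sel_topology f interior_of U \<noteq> {}"
    then have "sel_topology f interior_of U \<inter> (UNIV - U) \<noteq> {}"
      using openin_selection_by_label_prec_meets[OF L, folded f_def] by simp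
    then show False
      using interior_of_subset[of "sel_topology f" U] by blast
  qed
  have "U \<noteq> {} \<Longrightarrow> \<not> openin (sel_topology f) U"
    by (metis interior interior_of_openin)
  with interior show ?thesis
    using two_point_selection_selection_by[of "label_prec L", folded f_def] by blast
qed

end
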